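(* In the setting of the mirror triangle method with inexact $(\delta,L)$-oracle (see context), for every step $k\ge0$ performed by the method and every $x\in Q$, $$A_{k+1}F(x_{k+1})-A_kF(x_k)+V(x,u_{k+1})-V(x,u_k)\le\alpha_{k+1}F(x)+2\delta A_{k+1}.$$
   Context: $\mathbb{R}^n$ carries a norm $\|\cdot\|$ with dual norm $\|\lambda\|_*=\max_{\|\nu\|\le1}\langle\lambda,\nu\rangle$; $Q$ closed convex; $f:Q\to\mathbb{R}$ convex continuous, differentiable with $L$-Lipschitz gradient ($\|\nabla f(x)-\nabla f(y)\|_*\le L\|x-y\|$); $h$ convex on $Q$; $F=f+h$. Prox-function $d$: continuously differentiable, $1$-strongly convex w.r.t. $\|\cdot\|$; $V(x,y)=d(x)-d(y)-\langle\nabla d(y),x-y\rangle$. A $(\delta,L)$-oracle returns for query $y\in Q$ a pair $(f_\delta(y),\nabla f_\delta(y))$ with $0\le f(x)-f_\delta(y)-\langle\nabla f_\delta(y),x-y\rangle\le\frac L2\|x-y\|^2+\delta$ for all $x\in Q$. Method (with $x_0\in Q$, $0<L_0\le L$): $y_0=u_0=x_0$, $L_1=L_0/2$, $\alpha_0=A_0=0$. Step $k+1$ with current $L_{k+1}$: (i) $\alpha_{k+1}$ is the largest root of $A_k+\alpha=L_{k+1}\alpha^2$, $A_{k+1}=A_k+\alpha_{k+1}$; (ii) $y_{k+1}=(\alpha_{k+1}u_k+A_kx_k)/A_{k+1}$; (iii) $u_{k+1}=\arg\min_{x\in Q}\{V(x,u_k)+\alpha_{k+1}(f_\delta(y_{k+1})+\langle\nabla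 f_\delta(y_{k+1}),x-y_{k+1}\rangle+h(x))\}$; (iv) $x_{k+1}=(\alpha_{k+1}u_{k+1}+A_kx_k)/A_{k+1}$; (v) if $f_\delta(x_{k+1})\le f_\delta(y_{k+1})+\langle\nabla f_\delta(y_{k+1}),x_{k+1}-y_{k+1}\rangle+\frac{L_{k+1}}2\|x_{k+1}-y_{k+1}\|^2+\delta$, set $L_{k+2}=L_{k+1}/2$ and go to the next step; otherwise replace $L_{k+1}$ by $2L_{k+1}$ and repeat step $k+1$. *)

theory Defs
  imports "HOL-Analysis.Analysis"
begin

definition is_norm :: "('a::real_vector \<Rightarrow> real) \<Rightarrow> bool" where
  "is_norm nrm \<longleftrightarrow>
     (\<forall>x. 0 \<le> nrm x) \<and> (\<forall>x. nrm x = 0 \<longleftrightarrow> x = 0) \<and>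
     (\<forall>c x. nrm (c *\<^sub>R x) = \<bar>c\<bar> * nrm x) \<and>
     (\<forall>x y. nrm (x + y) \<le> nrm x + nrm y)"

definition dual_norm :: "('a::real_inner \<Rightarrow> real) \<Rightarrow> 'a \<Rightarrow> real" where
  "dual_norm nrm l = Sup ((\<lambda>v. inner l v) ` {v. nrm v \<le> 1})"

definition strongly_convex_on :: "'a::real_vector set \<Rightarrow> ('a \<Rightarrow> real) \<Rightarrow> ('a \<Rightarrow> real) \<Rightarrow> bool" where
  "strongly_convex_on Q nrm d \<longleftrightarrow>
     (\<forall>x\<in>Q. \<forall>y\<in>Q. \<forall>t::real. 0 \<le> t \<and> t \<le> 1 \<longrightarrow>
        d (t *\<^sub>R x + (1 - t) *\<^sub>R y) \<le> t * d x + (1 - t) * d y - t * (1 - t) / 2 * (nrm (x - y))\<^sup>2)"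

definition bregman :: "('a::real_inner \<Rightarrow> real) \<Rightarrow> ('a \<Rightarrow> 'a) \<Rightarrow> 'a \<Rightarrow> 'a \<Rightarrow> real" where
  "bregman d gradd x y = d x - d y - inner (gradd y) (x - y)"

definition delta_L_oracle ::
  "'a::real_inner set \<Rightarrow> ('a \<Rightarrow> real) \<Rightarrow> ('a \<Rightarrow> real) \<Rightarrow> real \<Rightarrow> real \<Rightarrow> ('a \<Rightarrow> real) \<Rightarrow> ('a \<Rightarrow> 'a) \<Rightarrow> bool" where
  "delta_L_oracle Q nrm f \<delta> L fd gd \<longleftrightarrow>
     (\<forall>y\<in>Q. \<forall>x\<in>Q. 0 \<le> f x - fd y - inner (gd y) (x - y) \<and>
        f x - fd y - inner (gd y) (x - y) \<le> L / 2 * (nrm (x - y))\<^sup>2 + \<delta>)"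

definition largest_root :: "real \<Rightarrow> real \<Rightarrow> real \<Rightarrow> bool" where
  "largest_root A L \<alpha> \<longleftrightarrow> A + \<alpha> = L * \<alpha>\<^sup>2 \<and> (\<forall>\<beta>. A + \<beta> = L * \<beta>\<^sup>2 \<longrightarrow> \<beta> \<le> \<alpha>)"

end

theory Submission
  imports Defs
begin

text \<open>
  Write \<open>x, u\<close> for \<open>x\<^sub>k, u\<^sub>k\<close> and \<open>x', y', u', a, A'\<close> for \<open>x\<^sub>k\<^sub>+\<^sub>1, y\<^sub>k\<^sub>+\<^sub>1, u\<^sub>k\<^sub>+\<^sub>1, \<alpha>\<^sub>k\<^sub>+\<^sub>1, A\<^sub>k\<^sub>+\<^sub>1\<close>.
  The model \<open>m(w) = f\<^sub>\<delta>(y') + \<langle>\<nabla>f\<^sub>\<delta>(y'), w - y'\<rangle>\<close> is affine and, by the left half of the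
  \<open>(\<delta>,L)\<close> inequality, a lower bound for \<open>f\<close> on \<open>Q\<close>. Since \<open>x' - y' = (a/A')(u' - u)\<close> and
  \<open>L\<^sub>k\<^sub>+\<^sub>1 a\<^sup>2 = A'\<close>, the accepted test gives \<open>A' f(x') \<le> A' m(x') + \<parallel>u' - u\<parallel>\<^sup>2/2 + 2\<delta>A'\<close>.
  Splitting \<open>A' m(x')\<close> and \<open>A' h(x')\<close> along the convex combination defining \<open>x'\<close>,
  bounding \<open>m \<le> f\<close> at \<open>x\<close> and at the comparison point, absorbing the quadratic term into
  \<open>V(u', u)\<close> by strong convexity of \<open>d\<close>, and using the three-point inequality of the
  mirror step \<open>u'\<close> yields the claim.
\<close>

lemma has_derivative_directional_quotient:
  fixes d :: "'a::real_normed_vector \<Rightarrow> real"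
  assumes "(d has_derivative D) (at p)"
  shows "((\<lambda>t. (d (p + t *\<^sub>R v) - d p) / t) \<longlongrightarrow> D v) (at_right 0)"
proof -
  have line: "((\<lambda>t::real. p + t *\<^sub>R v) has_derivative (\<lambda>s. s *\<^sub>R v)) (at 0)"
    by (auto intro!: derivative_eq_intros)
  have "((\<lambda>t. d (p + t *\<^sub>R v)) has_derivative (\<lambda>s. D (s *\<^sub>R v))) (at 0)"
    using has_derivative_compose[OF line] assms by (simp add: o_def)
  moreover have "D (s *\<^sub>R v) = s * D v" for s
    using assms has_derivative_bounded_linear linear_cmul bounded_linear.linear by fastforce
  ultimately have "((\<lambda>t. d (p + t *\<^sub>R v)) has_real_derivative D v) (at 0)"
    by (simp add: has_field_derivative_def mult.commute[of _ "D v"])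
  then have "((\<lambda>t. d (p + t *\<^sub>R v)) has_real_derivative D v) (at 0 within {0<..})"
    using has_field_derivative_at_within by blast
  then show ?thesis
    by (simp add: has_field_derivative_iff)
qed

lemma tendsto_at_right_0_le:
  fixes q r :: "real \<Rightarrow> real"
  assumes "(q \<longlongrightarrow> a) (at_right 0)" "(r \<longlongrightarrow> b) (at_right 0)"
    and "\<And>t. 0 < t \<Longrightarrow> t \<le> 1 \<Longrightarrow> q t \<le> r t"
  shows "a \<le> b"
proof (rule tendsto_le[OF _ assms(2) assms(1)])
  show "\<forall>\<^sub>F t in at_right 0. q t \<le> r t"
    unfolding eventually_at_right_field by (rule exI[of _ 1]) (auto intro: assms(3))
qed simp

lemma strongly_convex_on_bregman_ge:
  fixes d :: "'a::real_inner \<Rightarrow> real"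
  assumes sc: "strongly_convex_on Q nrm d"
    and d_grad: "\<And>p. (d has_derivative (\<lambda>v. inner (gradd p) v)) (at p)"
    and a: "a \<in> Q" and b: "b \<in> Q"
  shows "(nrm (a - b))\<^sup>2 / 2 \<le> bregman d gradd a b"
proof -
  let ?r = "\<lambda>t::real. d a - d b - (1 - t) / 2 * (nrm (a - b))\<^sup>2"
  have "inner (gradd b) (a - b) \<le> ?r 0"
  proof (rule tendsto_at_right_0_le)
    show "((\<lambda>t. (d (b + t *\<^sub>R (a - b)) - d b) / t) \<longlongrightarrow> inner (gradd b) (a - b)) (at_right 0)"
      using has_derivative_directional_quotient[OF d_grad] .
    show "(?r \<longlongrightarrow> ?r 0) (at_right 0)"
      by (intro tendsto_intros) auto
  next
    fix t :: real assume t: "0 < t" "t \<le> 1"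
    have "b + t *\<^sub>R (a - b) = t *\<^sub>R a + (1 - t) *\<^sub>R b" by (simp add: algebra_simps)
    with sc a b t have "d (b + t *\<^sub>R (a - b)) - d b \<le> t * ?r t"
      unfolding strongly_convex_on_def by (force simp: algebra_simps)
    with t show "(d (b + t *\<^sub>R (a - b)) - d b) / t \<le> ?r t"
      by (simp add: divide_le_eq mult.commute)
  qed
  then show ?thesis unfolding bregman_def by simp
qed

lemma convex_min_first_order:
  fixes d :: "'a::real_inner \<Rightarrow> real"
  assumes d_grad: "\<And>p. (d has_derivative (\<lambda>v. inner (gradd p) v)) (at p)"
    and Q: "convex Q" and psi: "convex_on Q psi" and u: "u \<in> Q" and z: "z \<in> Q"
    and min: "\<And>w. w \<in> Q \<Longrightarrow> d u + psi u \<le> d w + psi w"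
  shows "psi u - psi z \<le> inner (gradd u) (z - u)"
proof (rule tendsto_at_right_0_le[OF tendsto_const])
  show "((\<lambda>t. (d (u + t *\<^sub>R (z - u)) - d u) / t) \<longlongrightarrow> inner (gradd u) (z - u)) (at_right 0)"
    using has_derivative_directional_quotient[OF d_grad] .
next
  fix t :: real assume t: "0 < t" "t \<le> 1"
  have e: "u + t *\<^sub>R (z - u) = (1 - t) *\<^sub>R u + t *\<^sub>R z" by (simp add: algebra_simps)
  have "u + t *\<^sub>R (z - u) \<in> Q" unfolding e using Q u z t by (simp add: convexD)
  moreover have "psi (u + t *\<^sub>R (z - u)) \<le> (1 - t) * psi u + t * psi z"
    unfolding e using convex_onD[OF psi, of t u z] u z t by auto
  ultimately have "t * (psi u - psi z) \<le> d (u + t *\<^sub>R (z - u)) - d u"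
    using min by (force simp: algebra_simps)
  with t show "psi u - psi z \<le> (d (u + t *\<^sub>R (z - u)) - d u) / t"
    by (simp add: le_divide_eq mult.commute)
qed

lemma convex_on_inner_left:
  fixes g :: "'a::real_inner"
  assumes "convex S"
  shows "convex_on S (\<lambda>w. inner g w)"
  using assms by (simp add: convex_on_def inner_add_right)

lemma bregman_three_point:
  fixes d :: "'a::real_inner \<Rightarrow> real"
  assumes d_grad: "\<And>p. (d has_derivative (\<lambda>v. inner (gradd p) v)) (at p)"
    and Q: "convex Q" and phi: "convex_on Q phi" and u': "u' \<in> Q" and z: "z \<in> Q"
    and min: "\<And>w. w \<in> Q \<Longrightarrow> bregman d gradd u' u + phi u' \<le> bregman d gradd w u + phi w"
  shows "bregman d gradd z u' + bregman d gradd u' u + phi u' \<le> bregman d gradd z u + phi z"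
proof -
  define psi where "psi w = phi w + inner (- gradd u) w" for w
  have psi: "convex_on Q psi"
    unfolding psi_def using convex_on_add[OF phi convex_on_inner_left[OF Q]] .
  have shift: "bregman d gradd w u + phi w = d w + psi w - d u + inner (gradd u) u" for w
    unfolding bregman_def psi_def by (simp add: inner_diff_right)
  have "psi u' - psi z \<le> inner (gradd u') (z - u')"
    using convex_min_first_order[OF d_grad Q psi u' z] min shift by fastforce
  then show ?thesis
    using shift[of u'] shift[of z] unfolding bregman_def[of d gradd z u'] by linarith
qed

lemma largest_root_pos:
  assumes A: "0 \<le> A" and L: "0 < L" and root: "largest_root A L a"
  shows "0 < a"
proof -
  define s where "s = sqrt (1 + 4 * L * A)"
  define b where "b = (1 + s) / (2 * L)"
  have s0: "0 \<le> s" and s2: "s\<^sup>2 = 1 + 4 * L * A"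
    using A L by (simp_all add: s_def)
  have "L * b\<^sup>2 = (1 + 2 * s + s\<^sup>2) / (4 * L)"
    using L by (simp add: b_def power2_eq_square field_simps)
  also have "\<dots> = A + b"
    using L unfolding s2 b_def by (simp add: field_simps)
  finally have "b \<le> a"
    using root unfolding largest_root_def by simp
  moreover have "0 < b" using s0 L by (simp add: b_def)
  ultimately show ?thesis by linarith
qed

lemma weighted_mean_eq:
  fixes p q :: "'a::real_vector"
  assumes "0 < B + a"
  shows "(1 / (B + a)) *\<^sub>R (a *\<^sub>R p + B *\<^sub>R q) = (1 - a / (B + a)) *\<^sub>R q + (a / (B + a)) *\<^sub>R p"
proof -
  have "1 - a / (B + a) = B / (B + a)"
    using assms by (simp add: field_simps)
  then show ?thesis by (simp add: scaleR_add_right)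
qed

lemma weighted_mean_mem:
  fixes p q :: "'a::real_vector"
  assumes "convex Q" "p \<in> Q" "q \<in> Q" "0 < a" "0 \<le> B"
  shows "(1 / (B + a)) *\<^sub>R (a *\<^sub>R p + B *\<^sub>R q) \<in> Q"
  using assms weighted_mean_eq[of B a p q] by (simp add: convexD)

lemma accepted_test_upper_bound:
  fixes nrm :: "'a::real_inner \<Rightarrow> real"
  assumes norm: "is_norm nrm" and inexact_oracle: "delta_L_oracle Q nrm f \<delta> L fd gd"
    and x1: "x1 \<in> Q" and A1: "0 < A1" and Lc: "Lc * a\<^sup>2 = A1"
    and step: "x1 - y1 = (a / A1) *\<^sub>R (u1 - u0)"
    and test: "fd x1 \<le> fd y1 + inner (gd y1) (x1 - y1) + Lc / 2 * (nrm (x1 - y1))\<^sup>2 + \<delta>"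
  shows "A1 * f x1 \<le> A1 * (fd y1 + inner (gd y1) (x1 - y1)) + (nrm (u1 - u0))\<^sup>2 / 2 + 2 * \<delta> * A1"
proof -
  have nrm_0: "nrm 0 = 0" and nrm_scale: "nrm (c *\<^sub>R v) = \<bar>c\<bar> * nrm v" for c v
    using norm unfolding is_norm_def by blast+
  \<comment> \<open>the \<open>(\<delta>,L)\<close> inequality with query point and argument both \<open>x1\<close>\<close>
  have "f x1 - fd x1 \<le> \<delta>"
    using inexact_oracle x1 nrm_0 unfolding delta_L_oracle_def by fastforce
  with test have "f x1 \<le> (fd y1 + inner (gd y1) (x1 - y1) + 2 * \<delta>) + Lc / 2 * (nrm (x1 - y1))\<^sup>2"
    by linarith
  then have "A1 * f x1 \<le> A1 * (fd y1 + inner (gd y1) (x1 - y1) + 2 * \<delta>) + A1 * (Lc / 2 * (nrm (x1 - y1))\<^sup>2)"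
    using mult_left_mono[OF _ less_imp_le[OF A1]] by (metis distrib_left)
  also have "(nrm (x1 - y1))\<^sup>2 = (a / A1)\<^sup>2 * (nrm (u1 - u0))\<^sup>2"
    unfolding step nrm_scale by (simp add: power_mult_distrib power_divide)
  also have "A1 * (Lc / 2 * ((a / A1)\<^sup>2 * (nrm (u1 - u0))\<^sup>2)) = (nrm (u1 - u0))\<^sup>2 / 2"
    using A1 Lc by (simp add: power2_eq_square field_simps)
  finally show ?thesis by (simp add: algebra_simps)
qed

lemma mirror_triangle_step:
  fixes nrm :: "'a::real_inner \<Rightarrow> real"
  assumes norm: "is_norm nrm" and Q: "convex Q" and h_convex: "convex_on Q h"
    and d_grad: "\<And>p. (d has_derivative (\<lambda>v. inner (gradd p) v)) (at p)"
    and d_sc: "strongly_convex_on Q nrm d"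
    and inexact_oracle: "delta_L_oracle Q nrm f \<delta> L fd gd"
    and a: "0 < a" and A0: "0 \<le> A0" and A1: "A1 = A0 + a" and Lc: "Lc * a\<^sup>2 = A1"
    and x0: "x0 \<in> Q" and u0: "u0 \<in> Q" and u1: "u1 \<in> Q" and z: "z \<in> Q"
    and y1: "y1 = (1 / A1) *\<^sub>R (a *\<^sub>R u0 + A0 *\<^sub>R x0)"
    and x1: "x1 = (1 / A1) *\<^sub>R (a *\<^sub>R u1 + A0 *\<^sub>R x0)"
    and u1_min: "\<And>w. w \<in> Q \<Longrightarrow> bregman d gradd u1 u0 + a * (fd y1 + inner (gd y1) (u1 - y1) + h u1)
                                \<le> bregman d gradd w u0 + a * (fd y1 + inner (gd y1) (w - y1) + h w)"
    and test: "fd x1 \<le> fd y1 + inner (gd y1) (x1 - y1) + Lc / 2 * (nrm (x1 - y1))\<^sup>2 + \<delta>"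
  shows "A1 * (f x1 + h x1) - A0 * (f x0 + h x0) + bregman d gradd z u1 - bregman d gradd z u0
           \<le> a * (f z + h z) + 2 * \<delta> * A1"
proof -
  define model where "model w = fd y1 + inner (gd y1) (w - y1)" for w
  define t where "t = a / A1"
  have A1_pos: "0 < A1" and t: "0 \<le> t" "t \<le> 1"
    using a A0 A1 by (auto simp: t_def field_simps)
  have x1_comb: "x1 = (1 - t) *\<^sub>R x0 + t *\<^sub>R u1"
    using weighted_mean_eq[of A0 a u1 x0] A1_pos by (simp add: x1 A1 t_def)
  have y1_comb: "y1 = (1 - t) *\<^sub>R x0 + t *\<^sub>R u0"
    using weighted_mean_eq[of A0 a u0 x0] A1_pos by (simp add: y1 A1 t_def)
  have y1_Q: "y1 \<in> Q" and x1_Q: "x1 \<in> Q"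
    using weighted_mean_mem[OF Q _ x0 a A0] u0 u1 by (simp_all add: y1 x1 A1)
  have model_le: "model w \<le> f w" if "w \<in> Q" for w
    using inexact_oracle y1_Q that unfolding delta_L_oracle_def model_def by fastforce
  have "x1 - y1 = (a / A1) *\<^sub>R (u1 - u0)"
    by (simp add: x1_comb y1_comb t_def algebra_simps)
  from accepted_test_upper_bound[OF norm inexact_oracle x1_Q A1_pos Lc this test]
  have upper: "A1 * f x1 \<le> A1 * model x1 + (nrm (u1 - u0))\<^sup>2 / 2 + 2 * \<delta> * A1"
    by (simp add: model_def)
  have weights: "A1 * (1 - t) = A0" "A1 * t = a"
    using A1_pos A1 by (simp_all add: t_def field_simps)
  have split: "A1 * ((1 - t) * p + t * q) = A0 * p + a * q" for p q
    by (metis weights distrib_left mult.assoc)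
  have "model x1 = (1 - t) * model x0 + t * model u1"
    by (simp add: model_def x1_comb inner_add_right inner_diff_right algebra_simps)
  then have model_split: "A1 * model x1 = a * model u1 + A0 * model x0"
    using split by simp
  have "h x1 \<le> (1 - t) * h x0 + t * h u1"
    using convex_onD[OF h_convex t x0 u1] by (simp add: x1_comb)
  then have h_split: "A1 * h x1 \<le> a * h u1 + A0 * h x0"
    using split mult_left_mono[OF _ less_imp_le[OF A1_pos]] by (metis add.commute)
  have "convex_on Q (\<lambda>w. inner (gd y1) w + (fd y1 - inner (gd y1) y1))"
    using convex_on_inner_left[OF Q] Q by (intro convex_on_add) (simp_all add: convex_on_const)
  then have "convex_on Q model"
    by (simp add: model_def[abs_def] inner_diff_right algebra_simps)
  then have "convex_on Q (\<lambda>w. a * (model w + h w))"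
    using a h_convex by (intro convex_on_cmul convex_on_add) auto
  from bregman_three_point[OF d_grad Q this u1 z] u1_min
  have three_point: "bregman d gradd z u1 + bregman d gradd u1 u0 + a * (model u1 + h u1)
                       \<le> bregman d gradd z u0 + a * (model z + h z)"
    by (simp add: model_def add.assoc)
  have "a * model z \<le> a * f z" and "A0 * model x0 \<le> A0 * f x0"
    using model_le[OF z] model_le[OF x0] a A0 by (simp_all add: mult_left_mono)
  with upper model_split h_split three_point strongly_convex_on_bregman_ge[OF d_sc d_grad u1 u0]
  show ?thesis by (simp add: algebra_simps)
qed

theorem lemma4:
  fixes nrm :: "real ^ 'n \<Rightarrow> real"
    and Q :: "(real ^ 'n) set"
    and f h :: "real ^ 'n \<Rightarrow> real"
    and gradf :: "real ^ 'n \<Rightarrow> real ^ 'n"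
    and d :: "real ^ 'n \<Rightarrow> real"
    and gradd :: "real ^ 'n \<Rightarrow> real ^ 'n"
    and L L0 \<delta> :: real
    and fd :: "real ^ 'n \<Rightarrow> real"
    and gd :: "real ^ 'n \<Rightarrow> real ^ 'n"
    and Lk A \<alpha> :: "nat \<Rightarrow> real"
    and x y u :: "nat \<Rightarrow> real ^ 'n"
    and k :: nat and z :: "real ^ 'n"
  assumes norm: "is_norm nrm"
    and Q: "closed Q" "convex Q"
    and f_convex: "convex_on Q f" and f_cont: "continuous_on Q f"
    and f_grad: "\<And>p. p \<in> Q \<Longrightarrow> (f has_derivative (\<lambda>v. inner (gradf p) v)) (at p within Q)"
    and f_lip: "\<And>p q. p \<in> Q \<Longrightarrow> q \<in> Q \<Longrightarrow> dual_norm nrm (gradf p - gradf q) \<le> L * nrm (p - q)"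
    and h_convex: "convex_on Q h"
    and d_grad: "\<And>p. (d has_derivative (\<lambda>v. inner (gradd p) v)) (at p)"
    and d_cont: "continuous_on UNIV gradd"
    and d_sc: "strongly_convex_on Q nrm d"
    and delta_orc: "delta_L_oracle Q nrm f \<delta> L fd gd"
    and L0: "0 < L0" "L0 \<le> L"
    and init: "x 0 \<in> Q" "y 0 = x 0" "u 0 = x 0" "Lk 0 = L0" "A 0 = 0" "\<alpha> 0 = 0"
    and Lstep: "\<And>j. \<exists>m::nat. Lk (Suc j) = 2 ^ m * Lk j / 2"
    and alpha_step: "\<And>j. largest_root (A j) (Lk (Suc j)) (\<alpha> (Suc j))"
    and A_step: "\<And>j. A (Suc j) = A j + \<alpha> (Suc j)"
    and y_step: "\<And>j. y (Suc j) = (1 / A (Suc j)) *\<^sub>R (\<alpha> (Suc j) *\<^sub>R u j + A j *\<^sub>R x j)"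
    and u_step: "\<And>j. u (Suc j) \<in> Q \<and>
        (\<forall>w\<in>Q. bregman d gradd (u (Suc j)) (u j)
                 + \<alpha> (Suc j) * (fd (y (Suc j)) + inner (gd (y (Suc j))) (u (Suc j) - y (Suc j)) + h (u (Suc j)))
               \<le> bregman d gradd w (u j)
                 + \<alpha> (Suc j) * (fd (y (Suc j)) + inner (gd (y (Suc j))) (w - y (Suc j)) + h w))"
    and x_step: "\<And>j. x (Suc j) = (1 / A (Suc j)) *\<^sub>R (\<alpha> (Suc j) *\<^sub>R u (Suc j) + A j *\<^sub>R x j)"
    and test: "\<And>j. fd (x (Suc j)) \<le> fd (y (Suc j)) + inner (gd (y (Suc j))) (x (Suc j) - y (Suc j))
                    + Lk (Suc j) / 2 * (nrm (x (Suc j) - y (Suc j)))\<^sup>2 + \<delta>"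
    and z: "z \<in> Q"
  shows "A (Suc k) * (f (x (Suc k)) + h (x (Suc k))) - A k * (f (x k) + h (x k))
           + bregman d gradd z (u (Suc k)) - bregman d gradd z (u k)
         \<le> \<alpha> (Suc k) * (f z + h z) + 2 * \<delta> * A (Suc k)"
proof -
  have Lk_pos: "0 < Lk j" for j
  proof (induction j)
    case (Suc j)
    obtain m :: nat where "Lk (Suc j) = 2 ^ m * Lk j / 2" using Lstep by blast
    moreover have "0 < 2 ^ m * Lk j" using Suc by simp
    ultimately show ?case by simp
  qed (simp add: init L0)
  have A_nonneg: "0 \<le> A j" for j
  proof (induction j)
    case (Suc j)
    then show ?case using largest_root_pos[OF Suc Lk_pos alpha_step] A_step[of j] by simp
  qed (simp add: init)
  have alpha_pos: "0 < \<alpha> (Suc j)" for j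
    using largest_root_pos[OF A_nonneg Lk_pos alpha_step] .
  have iterates_in_Q: "x j \<in> Q \<and> u j \<in> Q" for j
  proof (induction j)
    case (Suc j)
    then show ?case
      using u_step[of j] weighted_mean_mem[OF Q(2) _ _ alpha_pos A_nonneg] by (auto simp: x_step A_step)
  qed (simp add: init)
  have Lk_alpha: "Lk (Suc k) * (\<alpha> (Suc k))\<^sup>2 = A (Suc k)"
    using alpha_step[of k] A_step[of k] unfolding largest_root_def by simp
  show ?thesis
    using mirror_triangle_step[OF norm Q(2) h_convex d_grad d_sc delta_orc alpha_pos A_nonneg
        A_step Lk_alpha _ _ _ z y_step x_step _ test] iterates_in_Q[of k] iterates_in_Q[of "Suc k"] u_step[of k]
    by blast
qed

end
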